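(* Let $(X,d)$ be a metric space, $\mu$ a Borel probability measure on $X$, and $T:X\to X$ a measurable map preserving $\mu$. Let $B_1\supseteq B_2\supseteq\cdots$ be a decreasing sequence of measurable subsets of $X$ with $\lim_{n\to\infty}\mu(B_n)=0$. Then $$\liminf_{n\to\infty}\frac{\log\tau_{B_n}(x)}{-\log\mu(B_n)}\ge 1\quad\text{for }\mu\text{-a.e. }x\in X.$$
   Context: For a set $A\subseteq X$, the waiting (hitting) time is $\tau_A(x)=\min\{n\in\mathbf N: T^n(x)\in A\}$, with $\tau_A(x)=\infty$ if no such $n$ exists. *)

theory Defs
  imports "HOL-Probability.Probability"
begin

definition hitting_time :: "('a \<Rightarrow> 'a) \<Rightarrow> 'a set \<Rightarrow> 'a \<Rightarrow> enat" where
  "hitting_time T A x =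
     (if \<exists>n::nat. n \<ge> 1 \<and> (T ^^ n) x \<in> A
      then enat (LEAST n::nat. n \<ge> 1 \<and> (T ^^ n) x \<in> A) else \<infinity>)"

definition hitting_ratio :: "enat \<Rightarrow> real \<Rightarrow> ereal" where
  "hitting_ratio t m =
     (if t = \<infinity> then \<infinity> else ereal (ln (real (the_enat t))) / ereal (- ln m))"

definition measure_preserving_map :: "'a measure \<Rightarrow> ('a \<Rightarrow> 'a) \<Rightarrow> bool" where
  "measure_preserving_map M T \<longleftrightarrow> T \<in> measurable M M \<and> distr M M T = M"

end

theory Submission
  imports Defs
begin

text \<open>Since T preserves \<mu>, the set where A is hit within K steps is a union of K preimages
  of A, so its measure is at most K \<mu>(A). Sort the B_n into levels j = \<lfloor>-log \<mu>(B_n)\<rfloor> and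
  let A_j be the largest B_n with \<mu>(B_n) \<le> exp(-j). For r < 1 the events
  \<tau>_{A_j} \<le> exp(r(j+1)) have summable measures exp(r) exp(-(1-r)j), so by Borel-Cantelli
  almost every x eventually avoids them. As B_n \<subseteq> A_j at level j and -log \<mu>(B_n) < j + 1,
  this gives log \<tau>_{B_n}(x) > -r log \<mu>(B_n) for all large n; then let r tend to 1.\<close>

lemma hitting_time_le_enat_iff:
  "hitting_time T A x \<le> enat K \<longleftrightarrow> (\<exists>k\<in>{1..K}. (T ^^ k) x \<in> A)"
proof
  assume le: "hitting_time T A x \<le> enat K"
  then have ex: "\<exists>n\<ge>1. (T ^^ n) x \<in> A"
    unfolding hitting_time_def by (auto split: if_splits)
  then show "\<exists>k\<in>{1..K}. (T ^^ k) x \<in> A"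
    using LeastI_ex[OF ex] le unfolding hitting_time_def by auto
next
  assume "\<exists>k\<in>{1..K}. (T ^^ k) x \<in> A"
  then obtain k where k: "1 \<le> k" "k \<le> K" "(T ^^ k) x \<in> A" by auto
  then have "(LEAST n. n \<ge> 1 \<and> (T ^^ n) x \<in> A) \<le> k" by (intro Least_le) auto
  then show "hitting_time T A x \<le> enat K" using k unfolding hitting_time_def by auto
qed

lemma hitting_time_antimono:
  assumes "A \<subseteq> A'"
  shows "hitting_time T A' x \<le> hitting_time T A x"
proof (cases "hitting_time T A x")
  case (enat t)
  then show ?thesis
    using assms hitting_time_le_enat_iff[of T A x t] hitting_time_le_enat_iff[of T A' x t] by auto
qed simp

lemma measure_preserving_map_funpow:
  assumes "measure_preserving_map M T"
  shows "measure_preserving_map M (T ^^ k)"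
proof (induction k)
  case 0
  then show ?case by (simp add: measure_preserving_map_def distr_id2 id_def)
next
  case (Suc k)
  have T: "T \<in> measurable M M" "distr M M T = M"
    using assms unfolding measure_preserving_map_def by auto
  have Tk: "T ^^ k \<in> measurable M M" "distr M M (T ^^ k) = M"
    using Suc unfolding measure_preserving_map_def by auto
  have "distr M M (T ^^ k \<circ> T) = distr (distr M M T) M (T ^^ k)"
    using distr_distr[OF Tk(1) T(1)] by simp
  then show ?case
    using T Tk unfolding measure_preserving_map_def funpow_Suc_right by simp
qed

lemma measure_preserving_map_vimage:
  assumes "measure_preserving_map M T" "A \<in> sets M"
  shows "T -` A \<inter> space M \<in> sets M"
    and "emeasure M (T -` A \<inter> space M) = emeasure M A"
  using assms emeasure_distr[of T M M A] unfolding measure_preserving_map_def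
  by (auto intro: measurable_sets)

lemma hitting_time_le_enat_eq_UN:
  "{x\<in>space M. hitting_time T A x \<le> enat K} = (\<Union>k\<in>{1..K}. (T ^^ k) -` A \<inter> space M)"
  by (auto simp: hitting_time_le_enat_iff)

lemma sets_hitting_time_le_enat:
  assumes "measure_preserving_map M T" "A \<in> sets M"
  shows "{x\<in>space M. hitting_time T A x \<le> enat K} \<in> sets M"
  unfolding hitting_time_le_enat_eq_UN
  using measure_preserving_map_vimage(1)[OF measure_preserving_map_funpow[OF assms(1)] assms(2)]
  by (intro sets.finite_UN) auto

lemma (in finite_measure) measure_hitting_time_le_enat:
  assumes "measure_preserving_map M T" "A \<in> sets M"
  shows "measure M {x\<in>space M. hitting_time T A x \<le> enat K} \<le> K * measure M A"
proof -
  note funpow = measure_preserving_map_vimage[OF measure_preserving_map_funpow[OF assms(1)] assms(2)]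
  have "measure M (\<Union>k\<in>{1..K}. (T ^^ k) -` A \<inter> space M)
      \<le> (\<Sum>k\<in>{1..K}. measure M ((T ^^ k) -` A \<inter> space M))"
    using funpow(1) by (intro finite_measure_subadditive_finite) auto
  also have "\<dots> = K * measure M A"
    using funpow(2) by (simp add: measure_def)
  finally show ?thesis unfolding hitting_time_le_enat_eq_UN .
qed

lemma (in finite_measure) AE_hitting_time_eq_infinity_if_null:
  assumes "measure_preserving_map M T" "A \<in> sets M" "measure M A = 0"
  shows "AE x in M. hitting_time T A x = \<infinity>"
proof -
  have "AE x in M. \<not> hitting_time T A x \<le> enat K" for K
  proof (rule AE_I')
    have "measure M {x\<in>space M. hitting_time T A x \<le> enat K} = 0"
      using measure_hitting_time_le_enat[OF assms(1,2), of K] by (simp add: assms(3) measure_le_0_iff)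
    then show "{x\<in>space M. hitting_time T A x \<le> enat K} \<in> null_sets M"
      using sets_hitting_time_le_enat[OF assms(1,2)] by (auto simp: emeasure_eq_measure)
  qed auto
  then have "AE x in M. \<forall>K. \<not> hitting_time T A x \<le> enat K"
    by (simp add: AE_all_countable)
  then show ?thesis
    by eventually_elim (metis enat.exhaust order_refl)
qed

lemma (in finite_measure) AE_eventually_hitting_time_gt_exp:
  assumes "measure_preserving_map M T" "\<And>j. A j \<in> sets M"
    and "\<And>j. measure M (A j) \<le> exp (- real j)" and "r < 1"
  shows "AE x in M. eventually
    (\<lambda>j. enat (nat \<lfloor>exp (r * (real j + 1))\<rfloor>) < hitting_time T (A j) x) sequentially"
proof -
  define K where "K j = nat \<lfloor>exp (r * (real j + 1))\<rfloor>" for j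
  define E where "E j = {x\<in>space M. hitting_time T (A j) x \<le> enat (K j)}" for j
  have E_sets: "E j \<in> sets M" for j
    unfolding E_def using sets_hitting_time_le_enat[OF assms(1,2)] .
  have E_measure: "measure M (E j) \<le> exp r * exp (r - 1) ^ j" for j
  proof -
    have "measure M (E j) \<le> K j * measure M (A j)"
      unfolding E_def by (rule measure_hitting_time_le_enat[OF assms(1,2)])
    also have "\<dots> \<le> exp (r * (real j + 1)) * exp (- real j)"
      using assms(3) by (intro mult_mono) (auto simp: K_def)
    also have "\<dots> = exp r * exp (r - 1) ^ j"
      by (simp add: exp_of_nat_mult[symmetric] exp_add[symmetric] algebra_simps)
    finally show ?thesis .
  qed
  have "summable (\<lambda>j. exp r * exp (r - 1) ^ j)"
    using assms(4) by (intro summable_mult summable_geometric) simp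
  then have "summable (\<lambda>j. measure M (E j))"
    by (rule summable_comparison_test'[where N=0]) (simp add: E_measure)
  then have "AE x in M. eventually (\<lambda>j. x \<in> space M - E j) sequentially"
    using E_sets by (intro borel_cantelli_AE1) (auto simp: less_top[symmetric])
  then show ?thesis
    by eventually_elim (erule eventually_mono, simp add: E_def K_def not_le)
qed

lemma one_le_liminf_if_eventually_greater:
  fixes f :: "nat \<Rightarrow> ereal"
  assumes "\<And>i. eventually (\<lambda>n. ereal (1 - 1 / Suc i) < f n) sequentially"
  shows "1 \<le> liminf f"
  unfolding le_Liminf_iff
proof (intro allI impI)
  fix y :: ereal
  assume "y < 1"
  then obtain r where r: "y < ereal r" "r < 1"
    using ereal_dense2 by force
  then obtain i where "1 / Suc i < 1 - r"
    by (metis diff_gt_0_iff_gt nat_approx_posE)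
  then have "y < ereal (1 - 1 / Suc i)"
    using r(1) by (simp add: order.strict_trans)
  then show "eventually (\<lambda>n. y < f n) sequentially"
    using assms[of i] by (auto elim: eventually_mono)
qed

lemma less_hitting_ratio:
  assumes "0 \<le> r" "0 < q" "q < 1"
    and "enat (nat \<lfloor>exp (r * (real (nat \<lfloor>- ln q\<rfloor>) + 1))\<rfloor>) < t"
  shows "ereal r < hitting_ratio t q"
proof (cases t)
  case (enat k)
  define D where "D = - ln q"
  have "0 < D"
    using assms(2,3) by (simp add: D_def)
  have "exp (r * D) \<le> exp (r * (real (nat \<lfloor>D\<rfloor>) + 1))"
    using assms(1) by (intro exp_le_cancel_iff[THEN iffD2] mult_left_mono) linarith+
  also have "\<dots> < k"
    using assms(4) enat unfolding D_def by (simp add: floor_less_iff nat_less_iff)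
  finally have "r * D < ln k"
    by (metis exp_gt_zero less_trans ln_exp ln_less_cancel_iff)
  then have "r < ln k / D"
    using \<open>0 < D\<close> by (simp add: field_simps)
  then show ?thesis
    using enat \<open>0 < D\<close> by (simp add: hitting_ratio_def D_def)
qed (simp add: hitting_ratio_def)

lemma liminf_hitting_ratio_ge_one:
  fixes p :: "nat \<Rightarrow> real" and s t :: "nat \<Rightarrow> enat"
  assumes "\<And>n. 0 \<le> p n" "p \<longlonglongrightarrow> 0"
    and "\<And>n. p n = 0 \<Longrightarrow> t n = \<infinity>"
    and "\<And>n. 0 < p n \<Longrightarrow> s (nat \<lfloor>- ln (p n)\<rfloor>) \<le> t n"
    and "\<And>i. eventually
      (\<lambda>j. enat (nat \<lfloor>exp ((1 - 1 / Suc i) * (real j + 1))\<rfloor>) < s j) sequentially"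
  shows "1 \<le> liminf (\<lambda>n. hitting_ratio (t n) (p n))"
proof (rule one_le_liminf_if_eventually_greater)
  fix i
  define r :: real where "r = 1 - 1 / Suc i"
  have "0 \<le> r"
    unfolding r_def by (simp add: field_simps)
  obtain J where J: "\<And>j. J \<le> j \<Longrightarrow> enat (nat \<lfloor>exp (r * (real j + 1))\<rfloor>) < s j"
    using assms(5)[of i] unfolding eventually_sequentially r_def by blast
  have "eventually (\<lambda>n. p n < exp (- real J)) sequentially"
    using assms(2) by (rule order_tendstoD) simp
  then show "eventually (\<lambda>n. ereal r < hitting_ratio (t n) (p n)) sequentially"
  proof eventually_elim
    case (elim n)
    show ?case
    proof (cases "p n = 0")
      case True
      then show ?thesis
        using assms(3) by (simp add: hitting_ratio_def)
    next
      case False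
      then have "0 < p n"
        using assms(1)[of n] by simp
      have "p n < 1"
        using elim by (simp add: order.strict_trans2)
      have "ln (p n) < ln (exp (- real J))"
        using elim \<open>0 < p n\<close> by (subst ln_less_cancel_iff) auto
      then have "ln (p n) < - real J"
        by simp
      then have "J \<le> nat \<lfloor>- ln (p n)\<rfloor>"
        by linarith
      then have "enat (nat \<lfloor>exp (r * (real (nat \<lfloor>- ln (p n)\<rfloor>) + 1))\<rfloor>)
          < s (nat \<lfloor>- ln (p n)\<rfloor>)"
        by (rule J)
      also have "\<dots> \<le> t n"
        using \<open>0 < p n\<close> by (rule assms(4))
      finally show ?thesis
        by (rule less_hitting_ratio[OF \<open>0 \<le> r\<close> \<open>0 < p n\<close> \<open>p n < 1\<close>])
    qed
  qed
qed

lemma le_exp_neg_nat_floor_neg_ln: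
  fixes q :: real
  assumes "0 < q" "q \<le> 1"
  shows "q \<le> exp (- real (nat \<lfloor>- ln q\<rfloor>))"
proof -
  have "real (nat \<lfloor>- ln q\<rfloor>) \<le> - ln q"
    using assms by simp
  then have "exp (ln q) \<le> exp (- real (nat \<lfloor>- ln q\<rfloor>))"
    by simp
  then show ?thesis
    using assms(1) by simp
qed

lemma (in prob_space) decseq_level_supersets:
  assumes "\<And>n. B n \<in> sets M" "decseq B" "(\<lambda>n. prob (B n)) \<longlonglongrightarrow> 0"
  obtains A where "\<And>j. A j \<in> sets M" "\<And>j. prob (A j) \<le> exp (- real j)"
    and "\<And>n. 0 < prob (B n) \<Longrightarrow> B n \<subseteq> A (nat \<lfloor>- ln (prob (B n))\<rfloor>)"
proof
  define A where "A j = B (LEAST n. prob (B n) \<le> exp (- real j))" for j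
  show "A j \<in> sets M" for j
    unfolding A_def by (rule assms(1))
  show "prob (A j) \<le> exp (- real j)" for j
  proof -
    have "eventually (\<lambda>n. prob (B n) < exp (- real j)) sequentially"
      using assms(3) by (rule order_tendstoD) simp
    then have "\<exists>n. prob (B n) \<le> exp (- real j)"
      unfolding eventually_sequentially by (meson le_refl less_imp_le)
    from LeastI_ex[OF this] show ?thesis
      unfolding A_def .
  qed
  show "B n \<subseteq> A (nat \<lfloor>- ln (prob (B n))\<rfloor>)" if "0 < prob (B n)" for n
  proof -
    have "prob (B n) \<le> exp (- real (nat \<lfloor>- ln (prob (B n))\<rfloor>))"
      using that by (intro le_exp_neg_nat_floor_neg_ln) simp_all
    then have "(LEAST m. prob (B m) \<le> exp (- real (nat \<lfloor>- ln (prob (B n))\<rfloor>))) \<le> n"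
      by (rule Least_le)
    with assms(2) show ?thesis
      unfolding A_def by (rule decseqD)
  qed
qed

theorem proposition2p1:
  fixes M :: "'a::metric_space measure"
    and T :: "'a \<Rightarrow> 'a"
    and B :: "nat \<Rightarrow> 'a set"
  assumes "prob_space M"
    and "sets M = sets borel"
    and "measure_preserving_map M T"
    and "\<And>n. B n \<in> sets M"
    and "decseq B"
    and "(\<lambda>n. measure M (B n)) \<longlonglongrightarrow> 0"
  shows "AE x in M. liminf (\<lambda>n. hitting_ratio (hitting_time T (B n) x) (measure M (B n))) \<ge> 1"
proof -
  interpret prob_space M by fact
  obtain A where A: "\<And>j. A j \<in> sets M" "\<And>j. prob (A j) \<le> exp (- real j)"
    and B_subset_A: "\<And>n. 0 < prob (B n) \<Longrightarrow> B n \<subseteq> A (nat \<lfloor>- ln (prob (B n))\<rfloor>)"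
    using decseq_level_supersets[OF assms(4-6)] by blast
  have "AE x in M. eventually (\<lambda>j.
      enat (nat \<lfloor>exp ((1 - 1 / Suc i) * (real j + 1))\<rfloor>) < hitting_time T (A j) x) sequentially"
    for i :: nat
    using assms(3) A by (rule AE_eventually_hitting_time_gt_exp) simp
  then have "AE x in M. \<forall>i. eventually (\<lambda>j.
      enat (nat \<lfloor>exp ((1 - 1 / Suc i) * (real j + 1))\<rfloor>) < hitting_time T (A j) x) sequentially"
    by (simp add: AE_all_countable)
  moreover have "AE x in M. prob (B n) = 0 \<longrightarrow> hitting_time T (B n) x = \<infinity>" for n
    using AE_hitting_time_eq_infinity_if_null[OF assms(3,4), of n] by (cases "prob (B n) = 0") auto
  then have "AE x in M. \<forall>n. prob (B n) = 0 \<longrightarrow> hitting_time T (B n) x = \<infinity>"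
    by (simp add: AE_all_countable)
  ultimately show ?thesis
  proof eventually_elim
    case (elim x)
    then show ?case
      using assms(6)
      by (intro liminf_hitting_ratio_ge_one[where s = "\<lambda>j. hitting_time T (A j) x"])
        (auto intro!: hitting_time_antimono B_subset_A)
  qed
qed

end
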